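(* Let $A$ be a unital ring and let $p\in A$ be a full idempotent. Then $\operatorname{sr}(A)\le \operatorname{sr}(pAp)$.
   Context: An idempotent $p$ in a unital ring $A$ is full if $ApA=A$ (the two-sided ideal generated by $p$ is $A$). A row $(a_1,\dots,a_n)\in A^n$ is right unimodular if $\sum_{i=1}^n a_iA=A$. A row $(a_1,\dots,a_n,b)\in A^{n+1}$ is reducible if there exist $c_1,\dots,c_n\in A$ such that $(a_1+bc_1,\dots,a_n+bc_n)$ is right unimodular. The (Bass) stable rank $\operatorname{sr}(A)$ is the least positive integer $n$ such that every right unimodular row in $A^{n+1}$ is reducible, or $\infty$ if no such $n$ exists. The corner $pAp$ is a ring with identity $p$. *)

theory Defs
  imports Main "HOL-Library.Extended_Nat"
begin

text \<open>A corner ring pAp is modelled as a subset S of the ambient ring with its own identity e;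
  the ring A itself is the case S = UNIV, e = 1.  Rows of length n are functions on {..<n}.\<close>

definition two_sided_ideal_gen :: "'a::ring_1 \<Rightarrow> 'a set" where
  "two_sided_ideal_gen p = {x. \<exists>(m::nat) a b. x = (\<Sum>i<m. a i * p * b i)}"

definition full_idempotent :: "'a::ring_1 \<Rightarrow> bool" where
  "full_idempotent p \<longleftrightarrow> p * p = p \<and> two_sided_ideal_gen p = UNIV"

definition corner :: "'a::ring_1 \<Rightarrow> 'a set" where
  "corner p = {p * a * p | a. True}"

definition right_unimodular :: "'a::ring_1 set \<Rightarrow> 'a \<Rightarrow> (nat \<Rightarrow> 'a) \<Rightarrow> nat \<Rightarrow> bool" where
  "right_unimodular S e a n \<longleftrightarrow>
     (\<exists>x. (\<forall>i<n. x i \<in> S) \<and> (\<Sum>i<n. a i * x i) = e)"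

definition reducible :: "'a::ring_1 set \<Rightarrow> 'a \<Rightarrow> (nat \<Rightarrow> 'a) \<Rightarrow> nat \<Rightarrow> bool" where
  "reducible S e a n \<longleftrightarrow>
     (\<exists>c. (\<forall>i<n. c i \<in> S) \<and> right_unimodular S e (\<lambda>i. a i + a n * c i) n)"

definition sr_condition :: "'a::ring_1 set \<Rightarrow> 'a \<Rightarrow> nat \<Rightarrow> bool" where
  "sr_condition S e n \<longleftrightarrow>
     (\<forall>a. (\<forall>i\<le>n. a i \<in> S) \<longrightarrow> right_unimodular S e a (Suc n) \<longrightarrow> reducible S e a n)"

definition stable_rank :: "'a::ring_1 set \<Rightarrow> 'a \<Rightarrow> enat" where
  "stable_rank S e =
     (if \<exists>n. 1 \<le> n \<and> sr_condition S e n
      then enat (LEAST n. 1 \<le> n \<and> sr_condition S e n) else \<infinity>)"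

end

(* Let R = pAp, suppose sr(R) <= n, and let (a_0, ..., a_n) be a unimodular row of A, say
   sum a_i b_i = 1.  Fullness of p gives 1 = sum_l e_l p f_l, which makes Ap a direct summand of
   the free right R-module R^m via y |-> (p f_l y p)_l.  In R^m the m + n - 1 vectors
   e_j + embed ((a_0 - 1) e_j p) (j < m) and embed (a_i p) (0 < i < n) generate modulo W + U,
   where U = embed (a_n A) and W = embed (sum_(0<i<n) a_i (1 - p) A).

   A stable range theorem for R^k, proved by induction on k (use sr(R) <= n to make the first
   column unimodular, then project along a vector with first entry p), corrects the generators
   by elements embed (a_n z_j) of U so that they generate modulo W alone.  A linear functional
   R^m -> A that inverts the embedding maps all of this into the right ideal generated by
   suitable a_i + a_n c_i, which therefore contains every y p and hence 1. *)

theory Submission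
  imports Defs
begin

definition right_ideal :: "'a::ring_1 set \<Rightarrow> bool" where
  "right_ideal I \<longleftrightarrow> 0 \<in> I \<and> (\<forall>x\<in>I. \<forall>y\<in>I. x + y \<in> I) \<and> (\<forall>x\<in>I. \<forall>t. x * t \<in> I)"

definition row_ideal :: "(nat \<Rightarrow> 'a::ring_1) \<Rightarrow> nat set \<Rightarrow> 'a set" where
  "row_ideal r I = {(\<Sum>i\<in>I. r i * q i) | q. True}"

lemma row_idealI: "x = (\<Sum>i\<in>I. r i * q i) \<Longrightarrow> x \<in> row_ideal r I"
  unfolding row_ideal_def by blast

lemma right_ideal_row_ideal: "right_ideal (row_ideal r I)"
  unfolding right_ideal_def
proof (intro conjI ballI allI)
  show "0 \<in> row_ideal r I"
    by (rule row_idealI[where q="\<lambda>_. 0"]) simp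
next
  fix x y assume "x \<in> row_ideal r I" "y \<in> row_ideal r I"
  then obtain q q' where "x = (\<Sum>i\<in>I. r i * q i)" "y = (\<Sum>i\<in>I. r i * q' i)"
    unfolding row_ideal_def by blast
  then have "x + y = (\<Sum>i\<in>I. r i * (q i + q' i))"
    by (simp add: distrib_left sum.distrib)
  then show "x + y \<in> row_ideal r I" by (rule row_idealI)
next
  fix x t assume "x \<in> row_ideal r I"
  then obtain q where "x = (\<Sum>i\<in>I. r i * q i)" unfolding row_ideal_def by blast
  then have "x * t = (\<Sum>i\<in>I. r i * (q i * t))"
    by (simp add: sum_distrib_right mult.assoc)
  then show "x * t \<in> row_ideal r I" by (rule row_idealI)
qed

lemma row_ideal_entry:
  assumes "finite I" "i \<in> I"
  shows "r i * t \<in> row_ideal r I"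
proof -
  have "r i * t = (\<Sum>i'\<in>I. r i' * (if i' = i then t else 0))"
    using assms by (simp add: if_distrib cong: if_cong)
  then show ?thesis by (rule row_idealI)
qed

lemma right_ideal_sum: "right_ideal J \<Longrightarrow> (\<And>i. i \<in> F \<Longrightarrow> g i \<in> J) \<Longrightarrow> (\<Sum>i\<in>F. g i) \<in> J"
  unfolding right_ideal_def by (induction F rule: infinite_finite_induct) auto

lemma right_unimodular_iff_row_ideal:
  "right_unimodular UNIV 1 r n \<longleftrightarrow> 1 \<in> row_ideal r {..<n}"
  unfolding right_unimodular_def row_ideal_def by auto

lemma sum_split_first_last:
  fixes g :: "nat \<Rightarrow> 'b::comm_monoid_add"
  assumes "1 \<le> n"
  shows "(\<Sum>i<Suc n. g i) = g 0 + (\<Sum>i\<in>{1..<n}. g i) + g n"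
proof -
  have "(\<Sum>i<n. g i) = g 0 + (\<Sum>i\<in>{1..<n}. g i)"
    using assms by (simp add: lessThan_atLeast0 sum.atLeast_Suc_lessThan)
  then show ?thesis by simp
qed

lemma stable_rank_le: "1 \<le> n \<Longrightarrow> sr_condition S e n \<Longrightarrow> stable_rank S e \<le> enat n"
  unfolding stable_rank_def by (auto intro: Least_le)

locale idempotent =
  fixes p :: "'a::ring_1"
  assumes idem: "p * p = p"
begin

abbreviation R :: "'a set" where "R \<equiv> corner p"

lemma corner_iff: "x \<in> R \<longleftrightarrow> p * x * p = x"
proof
  assume "x \<in> R"
  then obtain a where "x = p * a * p" unfolding corner_def by auto
  then show "p * x * p = x" by (metis idem mult.assoc)
next
  assume "p * x * p = x"
  then show "x \<in> R" unfolding corner_def by (metis (mono_tags, lifting) mem_Collect_eq)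
qed

lemma idem_mult_left [simp]: "p * (p * x) = p * x"
  by (metis idem mult.assoc)

lemma corner_sandwich: "p * a * p \<in> R"
  unfolding corner_def by auto

lemma corner_left_unit: "x \<in> R \<Longrightarrow> p * x = x"
  by (metis corner_iff idem mult.assoc)

lemma corner_right_unit: "x \<in> R \<Longrightarrow> x * p = x"
  by (metis corner_iff idem mult.assoc)

lemma corner_zero [simp]: "0 \<in> R"
  using corner_iff by simp

lemma corner_unit [simp]: "p \<in> R"
  using corner_iff idem by simp

lemma corner_add [simp]: "x \<in> R \<Longrightarrow> y \<in> R \<Longrightarrow> x + y \<in> R"
  unfolding corner_iff by (simp add: distrib_left distrib_right)

lemma corner_diff [simp]: "x \<in> R \<Longrightarrow> y \<in> R \<Longrightarrow> x - y \<in> R"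
  unfolding corner_iff by (simp add: left_diff_distrib right_diff_distrib)

lemma corner_uminus [simp]: "x \<in> R \<Longrightarrow> - x \<in> R"
  unfolding corner_iff by simp

lemma corner_mult [simp]: "x \<in> R \<Longrightarrow> y \<in> R \<Longrightarrow> x * y \<in> R"
  by (metis corner_iff corner_left_unit corner_right_unit mult.assoc)

lemma corner_sum [simp]: "(\<And>j. j \<in> F \<Longrightarrow> f j \<in> R) \<Longrightarrow> (\<Sum>j\<in>F. f j) \<in> R"
  by (induction F rule: infinite_finite_induct) auto

lemma sr_condition_Suc:
  assumes sr: "sr_condition R p n"
  shows "sr_condition R p (Suc n)"
  unfolding sr_condition_def
proof (intro allI impI)
  fix a assume aR: "\<forall>i\<le>Suc n. a i \<in> R" and "right_unimodular R p a (Suc (Suc n))"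
  then obtain x where xR: "\<forall>i<Suc (Suc n). x i \<in> R" and xs: "(\<Sum>i<Suc (Suc n). a i * x i) = p"
    unfolding right_unimodular_def by blast
  \<comment> \<open>Merge the last two entries into b and reduce the shorter row.\<close>
  define b where "b = a n * x n + a (Suc n) * x (Suc n)"
  define a' where "a' = (\<lambda>i. if i < n then a i else b)"
  have bR: "b \<in> R" unfolding b_def using aR xR by simp
  have "(\<Sum>i<Suc n. a' i * (if i < n then x i else p)) = (\<Sum>i<n. a i * x i) + b * p"
    unfolding a'_def by simp
  also have "\<dots> = p" using xs corner_right_unit[OF bR] unfolding b_def by (simp add: add.assoc)
  finally have "right_unimodular R p a' (Suc n)"
    unfolding right_unimodular_def using xR
    by (intro exI[of _ "\<lambda>i. if i < n then x i else p"]) auto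
  moreover have "\<forall>i\<le>n. a' i \<in> R" unfolding a'_def using aR bR by simp
  ultimately have "reducible R p a' n" using sr unfolding sr_condition_def by blast
  then obtain c y where cR: "\<forall>i<n. c i \<in> R" and yR: "\<forall>i<n. y i \<in> R"
    and cy: "(\<Sum>i<n. (a i + b * c i) * y i) = p"
    unfolding reducible_def right_unimodular_def a'_def by auto
  define c' where "c' = (\<lambda>i. if i < n then x (Suc n) * c i else 0)"
  define y' where "y' = (\<lambda>i. if i < n then y i else (\<Sum>j<n. x n * c j * y j))"
  have "(\<Sum>i<Suc n. (a i + a (Suc n) * c' i) * y' i)
      = (\<Sum>i<n. (a i + a (Suc n) * (x (Suc n) * c i)) * y i + a n * (x n * c i * y i))"
    unfolding c'_def y'_def by (simp add: sum_distrib_left sum.distrib)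
  also have "\<dots> = (\<Sum>i<n. (a i + b * c i) * y i)"
    unfolding b_def by (intro sum.cong) (simp_all add: algebra_simps)
  finally have "(\<Sum>i<Suc n. (a i + a (Suc n) * c' i) * y' i) = p"
    using cy by simp
  moreover have "\<forall>i<Suc n. y' i \<in> R \<and> c' i \<in> R"
    unfolding y'_def c'_def using xR cR yR by (auto intro!: corner_sum)
  ultimately show "reducible R p a (Suc n)"
    unfolding reducible_def right_unimodular_def by blast
qed

lemma sr_condition_mono: "sr_condition R p n \<Longrightarrow> n \<le> N \<Longrightarrow> sr_condition R p N"
  by (induction N) (auto simp: le_Suc_eq intro: sr_condition_Suc)

text \<open>Elements of the right R-module R^k are functions on nat of which only the entries
  below k matter; identities between vectors are only ever asserted below k.\<close>

definition corner_vec :: "nat \<Rightarrow> (nat \<Rightarrow> 'a) \<Rightarrow> bool" where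
  "corner_vec k x \<longleftrightarrow> (\<forall>i<k. x i \<in> R)"

definition submodule :: "nat \<Rightarrow> (nat \<Rightarrow> 'a) set \<Rightarrow> bool" where
  "submodule k M \<longleftrightarrow> (\<forall>x\<in>M. corner_vec k x) \<and> (\<lambda>_. 0) \<in> M \<and>
     (\<forall>x\<in>M. \<forall>y\<in>M. (\<lambda>i. x i + y i) \<in> M) \<and> (\<forall>x\<in>M. \<forall>r\<in>R. (\<lambda>i. x i * r) \<in> M)"

definition module_sum :: "(nat \<Rightarrow> 'a) set \<Rightarrow> (nat \<Rightarrow> 'a) set \<Rightarrow> (nat \<Rightarrow> 'a) set" where
  "module_sum W U = {(\<lambda>i. w i + u i) | w u. w \<in> W \<and> u \<in> U}"

definition in_span :: "nat \<Rightarrow> nat \<Rightarrow> (nat \<Rightarrow> nat \<Rightarrow> 'a) \<Rightarrow> (nat \<Rightarrow> 'a) set \<Rightarrow> (nat \<Rightarrow> 'a) \<Rightarrow> bool" where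
  "in_span k N G M x \<longleftrightarrow> (\<exists>\<alpha> w. (\<forall>j<N. \<alpha> j \<in> R) \<and> w \<in> M \<and>
     (\<forall>i<k. x i = (\<Sum>j<N. G j i * \<alpha> j) + w i))"

definition generates :: "nat \<Rightarrow> nat \<Rightarrow> (nat \<Rightarrow> nat \<Rightarrow> 'a) \<Rightarrow> (nat \<Rightarrow> 'a) set \<Rightarrow> bool" where
  "generates k N G M \<longleftrightarrow> (\<forall>x. corner_vec k x \<longrightarrow> in_span k N G M x)"

lemma corner_vec_Suc_0: "corner_vec (Suc k) x \<Longrightarrow> x 0 \<in> R"
  unfolding corner_vec_def by simp

lemma submodule_vec: "submodule k M \<Longrightarrow> x \<in> M \<Longrightarrow> i < k \<Longrightarrow> x i \<in> R"
  unfolding submodule_def corner_vec_def by blast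

lemma submodule_zero: "submodule k M \<Longrightarrow> (\<lambda>_. 0) \<in> M"
  unfolding submodule_def by blast

lemma submodule_add: "submodule k M \<Longrightarrow> x \<in> M \<Longrightarrow> y \<in> M \<Longrightarrow> (\<lambda>i. x i + y i) \<in> M"
  unfolding submodule_def by blast

lemma submodule_scale: "submodule k M \<Longrightarrow> x \<in> M \<Longrightarrow> r \<in> R \<Longrightarrow> (\<lambda>i. x i * r) \<in> M"
  unfolding submodule_def by blast

lemma submodule_lincomb:
  assumes M: "submodule k M" and "finite F" and "\<forall>j\<in>F. f j \<in> M \<and> r j \<in> R"
  shows "(\<lambda>i. \<Sum>j\<in>F. f j i * r j) \<in> M"
  using assms(2,3)
proof (induction F rule: finite_induct)
  case empty
  then show ?case using submodule_zero[OF M] by simp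
next
  case (insert a F)
  have "(\<lambda>i. f a i * r a) \<in> M" using insert.prems submodule_scale[OF M] by simp
  from submodule_add[OF M this] show ?case using insert by simp
qed

lemma module_sumI: "w \<in> W \<Longrightarrow> u \<in> U \<Longrightarrow> (\<lambda>i. w i + u i) \<in> module_sum W U"
  unfolding module_sum_def by blast

lemma module_sumE:
  assumes "x \<in> module_sum W U"
  obtains w u where "x = (\<lambda>i. w i + u i)" "w \<in> W" "u \<in> U"
  using assms unfolding module_sum_def by blast

lemma submodule_module_sum:
  assumes W: "submodule k W" and U: "submodule k U"
  shows "submodule k (module_sum W U)"
  unfolding submodule_def
proof (intro conjI ballI)
  fix x assume "x \<in> module_sum W U"
  then show "corner_vec k x"
    unfolding corner_vec_def by (auto elim!: module_sumE simp: submodule_vec[OF W] submodule_vec[OF U])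
next
  show "(\<lambda>_. 0) \<in> module_sum W U"
    using module_sumI[OF submodule_zero[OF W] submodule_zero[OF U]] by simp
next
  fix x y assume x: "x \<in> module_sum W U" and y: "y \<in> module_sum W U"
  obtain w u where x_eq: "x = (\<lambda>i. w i + u i)" and "w \<in> W" "u \<in> U"
    using x by (rule module_sumE)
  obtain w' u' where y_eq: "y = (\<lambda>i. w' i + u' i)" and "w' \<in> W" "u' \<in> U"
    using y by (rule module_sumE)
  have "(\<lambda>i. w i + w' i + (u i + u' i)) \<in> module_sum W U"
    by (intro module_sumI submodule_add[OF W] submodule_add[OF U]) fact+
  then show "(\<lambda>i. x i + y i) \<in> module_sum W U"
    unfolding x_eq y_eq by (simp add: algebra_simps)
next
  fix x r assume x: "x \<in> module_sum W U" and "r \<in> R"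
  obtain w u where xy: "x = (\<lambda>i. w i + u i)" "w \<in> W" "u \<in> U"
    using x by (rule module_sumE)
  have "(\<lambda>i. w i * r + u i * r) \<in> module_sum W U"
    using module_sumI[OF submodule_scale[OF W] submodule_scale[OF U]] xy \<open>r \<in> R\<close> by simp
  then show "(\<lambda>i. x i * r) \<in> module_sum W U"
    using xy by (simp add: algebra_simps)
qed

lemma in_span_cong: "in_span k N G M x \<Longrightarrow> (\<forall>i<k. x i = y i) \<Longrightarrow> in_span k N G M y"
  unfolding in_span_def by metis

lemma generates_cong:
  assumes "\<forall>j<N. \<forall>i<k. G j i = G' j i"
  shows "generates k N G M \<longleftrightarrow> generates k N G' M"
proof -
  have "(\<Sum>j<N. G j i * \<alpha> j) = (\<Sum>j<N. G' j i * \<alpha> j)" if "i < k" for i \<alpha>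
    using assms that by (intro sum.cong) auto
  then show ?thesis unfolding generates_def in_span_def by auto
qed

lemma generates_mono: "M \<subseteq> M' \<Longrightarrow> generates k N G M \<Longrightarrow> generates k N G M'"
  unfolding generates_def in_span_def by blast

lemma in_span_module: "w \<in> M \<Longrightarrow> in_span k N G M w"
  unfolding in_span_def by (intro exI[of _ w, THEN exI[of _ "\<lambda>_. 0"]]) auto

lemma in_span_generator:
  assumes "j < N" "corner_vec k (G j)" "submodule k M"
  shows "in_span k N G M (G j)"
  unfolding in_span_def
proof (rule exI[of _ "\<lambda>l. if l = j then p else 0"], rule exI[of _ "\<lambda>_. 0"], intro conjI allI impI)
  fix i assume "i < k"
  then have "G j i * p = G j i"
    using assms(2) corner_right_unit unfolding corner_vec_def by auto
  then show "G j i = (\<Sum>l<N. G l i * (if l = j then p else 0)) + 0"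
    using assms(1) by (simp add: if_distrib cong: if_cong)
qed (use submodule_zero[OF assms(3)] in auto)

lemma in_span_add:
  assumes M: "submodule k M" and "in_span k N G M x" "in_span k N G M y"
  shows "in_span k N G M (\<lambda>i. x i + y i)"
proof -
  obtain \<alpha> w \<beta> w' where a: "\<forall>j<N. \<alpha> j \<in> R" "w \<in> M" "\<forall>i<k. x i = (\<Sum>j<N. G j i * \<alpha> j) + w i"
    and b: "\<forall>j<N. \<beta> j \<in> R" "w' \<in> M" "\<forall>i<k. y i = (\<Sum>j<N. G j i * \<beta> j) + w' i"
    using assms(2,3) unfolding in_span_def by blast
  show ?thesis unfolding in_span_def
  proof (rule exI[of _ "\<lambda>j. \<alpha> j + \<beta> j"], rule exI[of _ "\<lambda>i. w i + w' i"], intro conjI allI impI)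
    fix i assume "i < k"
    then show "x i + y i = (\<Sum>j<N. G j i * (\<alpha> j + \<beta> j)) + (w i + w' i)"
      using a(3) b(3) by (simp add: distrib_left sum.distrib algebra_simps)
  qed (use a b submodule_add[OF M] in auto)
qed

lemma in_span_scale:
  assumes M: "submodule k M" and "in_span k N G M x" and r: "r \<in> R"
  shows "in_span k N G M (\<lambda>i. x i * r)"
proof -
  obtain \<alpha> w where a: "\<forall>j<N. \<alpha> j \<in> R" "w \<in> M" "\<forall>i<k. x i = (\<Sum>j<N. G j i * \<alpha> j) + w i"
    using assms(2) unfolding in_span_def by blast
  show ?thesis unfolding in_span_def
  proof (rule exI[of _ "\<lambda>j. \<alpha> j * r"], rule exI[of _ "\<lambda>i. w i * r"], intro conjI allI impI)
    fix i assume "i < k"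
    then show "x i * r = (\<Sum>j<N. G j i * (\<alpha> j * r)) + w i * r"
      using a(3) by (simp add: distrib_right sum_distrib_right mult.assoc)
  qed (use a r submodule_scale[OF M] in auto)
qed

lemma in_span_sum:
  assumes M: "submodule k M" and "finite F" and "\<forall>j\<in>F. in_span k N G M (f j)"
  shows "in_span k N G M (\<lambda>i. \<Sum>j\<in>F. f j i)"
  using assms(2,3)
proof (induction F rule: finite_induct)
  case empty
  then show ?case using in_span_module[OF submodule_zero[OF M]] by simp
next
  case (insert a F)
  then show ?case using in_span_add[OF M, of N G "f a" "\<lambda>i. \<Sum>j\<in>F. f j i"] by simp
qed

lemma in_span_lincomb:
  assumes M: "submodule k M" and "\<forall>j<(N'::nat). in_span k N G M (F j)" and "\<forall>j<N'. \<beta> j \<in> R"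
  shows "in_span k N G M (\<lambda>i. \<Sum>j<N'. F j i * \<beta> j)"
proof -
  have "\<forall>j\<in>{..<N'}. in_span k N G M (\<lambda>i. F j i * \<beta> j)"
    using assms(2,3) in_span_scale[OF M] by blast
  then show ?thesis by (intro in_span_sum[OF M]) auto
qed

lemma in_span_corner_vec:
  assumes M: "submodule k M" and G: "\<forall>j<N. corner_vec k (G j)" and "in_span k N G M x"
  shows "corner_vec k x"
proof -
  obtain \<alpha> w where a: "\<forall>j<N. \<alpha> j \<in> R" "w \<in> M" "\<forall>i<k. x i = (\<Sum>j<N. G j i * \<alpha> j) + w i"
    using assms(3) unfolding in_span_def by blast
  show ?thesis
    using G a submodule_vec[OF M a(2)] by (auto simp: corner_vec_def intro!: corner_add corner_sum)
qed

lemma in_span_diff: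
  assumes M: "submodule k M" and G: "\<forall>j<N. corner_vec k (G j)"
    and x: "in_span k N G M x" and y: "in_span k N G M y"
  shows "in_span k N G M (\<lambda>i. x i - y i)"
proof -
  have "in_span k N G M (\<lambda>i. x i + y i * (- p))"
    using in_span_add[OF M x in_span_scale[OF M y, of "- p"]] by simp
  moreover have "\<forall>i<k. x i + y i * (- p) = x i - y i"
    using in_span_corner_vec[OF M G y] corner_right_unit unfolding corner_vec_def by simp
  ultimately show ?thesis by (rule in_span_cong)
qed

lemma generates_trans:
  assumes M: "submodule k M" and F: "\<forall>j<N'. in_span k N G M (F j)" and "generates k N' F M"
  shows "generates k N G M"
  unfolding generates_def
proof (intro allI impI)
  fix x assume "corner_vec k x"
  then obtain \<beta> w where b: "\<forall>j<N'. \<beta> j \<in> R" "w \<in> M" "\<forall>i<k. x i = (\<Sum>j<N'. F j i * \<beta> j) + w i"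
    using assms(3) unfolding generates_def in_span_def by blast
  have "in_span k N G M (\<lambda>i. (\<Sum>j<N'. F j i * \<beta> j) + w i)"
    using in_span_add[OF M in_span_lincomb[OF M F b(1)] in_span_module[OF b(2)]] .
  then show "in_span k N G M x" using b(3) in_span_cong by fastforce
qed

lemma generates_perturb:
  assumes M: "submodule k M" and G: "\<forall>j<N. corner_vec k (G j)" and w: "\<forall>j<N. w j \<in> M"
    and F: "\<forall>j<N. \<forall>i<k. F j i = G j i + w j i" and "generates k N F M"
  shows "generates k N G M"
proof (rule generates_trans[OF M _ assms(5)], intro allI impI)
  fix j assume "j < N"
  then have "in_span k N G M (\<lambda>i. G j i + w j i)"
    using in_span_add[OF M in_span_generator in_span_module] G M w by blast
  then show "in_span k N G M (F j)" using F \<open>j < N\<close> in_span_cong by fastforce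
qed

lemma generates_zero_dim: "submodule 0 M \<Longrightarrow> generates 0 N G M"
  unfolding generates_def in_span_def
  by (intro allI impI exI[of _ "\<lambda>_. 0"] conjI) (auto simp: submodule_zero)

text \<open>For g with g 0 = p, eliminate g is the projection of R^(k+1) along gR onto the last
  k coordinates: it is R-linear and kills g.\<close>

definition eliminate :: "(nat \<Rightarrow> 'a) \<Rightarrow> (nat \<Rightarrow> 'a) \<Rightarrow> (nat \<Rightarrow> 'a)" where
  "eliminate g x = (\<lambda>i. x (Suc i) - g (Suc i) * x 0)"

lemma eliminate_add: "eliminate g (\<lambda>i. x i + y i) = (\<lambda>i. eliminate g x i + eliminate g y i)"
  unfolding eliminate_def by (simp add: algebra_simps)

lemma eliminate_scale: "eliminate g (\<lambda>i. x i * r) = (\<lambda>i. eliminate g x i * r)"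
  unfolding eliminate_def by (simp add: algebra_simps)

lemma eliminate_lincomb:
  "eliminate g (\<lambda>i. (\<Sum>j<N. G j i * \<alpha> j) + w i) =
     (\<lambda>i. (\<Sum>j<N. eliminate g (G j) i * \<alpha> j) + eliminate g w i)"
  unfolding eliminate_def by (rule ext) (simp add: sum_distrib_left sum_subtractf algebra_simps)

lemma eliminate_corner_vec:
  "corner_vec (Suc k) g \<Longrightarrow> corner_vec (Suc k) x \<Longrightarrow> corner_vec k (eliminate g x)"
  unfolding eliminate_def corner_vec_def by simp

lemma eliminate_self:
  assumes "corner_vec (Suc k) g" "g 0 = p" "i < k"
  shows "eliminate g g i = 0"
  using assms corner_right_unit unfolding eliminate_def corner_vec_def by simp

lemma submodule_eliminate:
  assumes W: "submodule (Suc k) W" and g: "corner_vec (Suc k) g"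
  shows "submodule k (eliminate g ` W)"
  unfolding submodule_def
proof (intro conjI ballI)
  fix x assume "x \<in> eliminate g ` W"
  then show "corner_vec k x"
    using eliminate_corner_vec[OF g] W unfolding submodule_def by blast
next
  have "eliminate g (\<lambda>_. 0) = (\<lambda>_. 0)" unfolding eliminate_def by simp
  then show "(\<lambda>_. 0) \<in> eliminate g ` W" using submodule_zero[OF W] by force
next
  fix x y assume "x \<in> eliminate g ` W" "y \<in> eliminate g ` W"
  then obtain w w' where "w \<in> W" "w' \<in> W" "x = eliminate g w" "y = eliminate g w'" by blast
  then have "(\<lambda>i. x i + y i) = eliminate g (\<lambda>i. w i + w' i)" "(\<lambda>i. w i + w' i) \<in> W"
    using submodule_add[OF W] eliminate_add by simp_all
  then show "(\<lambda>i. x i + y i) \<in> eliminate g ` W" by blast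
next
  fix x r assume "x \<in> eliminate g ` W" "r \<in> R"
  then obtain w where "w \<in> W" "x = eliminate g w" by blast
  then have "(\<lambda>i. x i * r) = eliminate g (\<lambda>i. w i * r)" "(\<lambda>i. w i * r) \<in> W"
    using submodule_scale[OF W _ \<open>r \<in> R\<close>] eliminate_scale by simp_all
  then show "(\<lambda>i. x i * r) \<in> eliminate g ` W" by blast
qed

lemma eliminate_module_sum:
  "eliminate g ` module_sum W U \<subseteq> module_sum (eliminate g ` W) (eliminate g ` U)"
proof
  fix x assume "x \<in> eliminate g ` module_sum W U"
  then obtain w u where "w \<in> W" "u \<in> U" "x = eliminate g (\<lambda>i. w i + u i)"
    by (auto elim!: module_sumE)
  then show "x \<in> module_sum (eliminate g ` W) (eliminate g ` U)"
    using module_sumI[of "eliminate g w" _ "eliminate g u"] by (simp add: eliminate_add)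
qed

lemma generates_eliminate:
  assumes g: "corner_vec (Suc k) g" "g 0 = p" and "G N = g"
    and "generates (Suc k) (Suc N) G M"
  shows "generates k N (\<lambda>j. eliminate g (G j)) (eliminate g ` M)"
  unfolding generates_def
proof (intro allI impI)
  fix y assume y: "corner_vec k y"
  define x where "x = (\<lambda>i. if i = 0 then 0 else y (i - 1))"
  have "corner_vec (Suc k) x"
    using y unfolding corner_vec_def x_def by (auto simp: less_Suc_eq_0_disj)
  then obtain \<alpha> w where a: "\<forall>j<Suc N. \<alpha> j \<in> R" "w \<in> M"
    "\<forall>i<Suc k. x i = (\<Sum>j<Suc N. G j i * \<alpha> j) + w i"
    using assms(4) unfolding generates_def in_span_def by blast
  have "eliminate g x = y" unfolding eliminate_def x_def by simp
  moreover have "\<forall>i<k. eliminate g x i = eliminate g (\<lambda>i. (\<Sum>j<Suc N. G j i * \<alpha> j) + w i) i"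
    using a(3) unfolding eliminate_def by simp
  ultimately have "\<forall>i<k. y i = (\<Sum>j<Suc N. eliminate g (G j) i * \<alpha> j) + eliminate g w i"
    unfolding eliminate_lincomb by simp
  then have "\<forall>i<k. y i = (\<Sum>j<N. eliminate g (G j) i * \<alpha> j) + eliminate g w i"
    using eliminate_self[OF g] \<open>G N = g\<close> by simp
  moreover have "\<forall>j<N. \<alpha> j \<in> R" "eliminate g w \<in> eliminate g ` M"
    using a(1,2) by simp_all
  ultimately show "in_span k N (\<lambda>j. eliminate g (G j)) (eliminate g ` M) y"
    unfolding in_span_def by blast
qed

lemma generates_lift:
  assumes g: "corner_vec (Suc k) g" "g 0 = p"
    and H: "\<forall>j<N. corner_vec (Suc k) (H j)" and W: "submodule (Suc k) W"
    and gen: "generates k N (\<lambda>j. eliminate g (H j)) (eliminate g ` W)"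
  shows "generates (Suc k) (Suc N) (\<lambda>j. if j < N then H j else g) W"
  unfolding generates_def
proof (intro allI impI)
  fix x assume x: "corner_vec (Suc k) x"
  obtain \<alpha> w where a: "\<forall>j<N. \<alpha> j \<in> R" "w \<in> W"
    "\<forall>i<k. eliminate g x i = (\<Sum>j<N. eliminate g (H j) i * \<alpha> j) + eliminate g w i"
    using gen eliminate_corner_vec[OF g(1) x] unfolding generates_def in_span_def by blast
  define z where "z = (\<lambda>i. (\<Sum>j<N. H j i * \<alpha> j) + w i)"
  \<comment> \<open>x - z is killed by eliminate g, so it is g times its first entry.\<close>
  define \<beta> where "\<beta> = x 0 - z 0"
  have "z 0 \<in> R"
    unfolding z_def using H a(1) submodule_vec[OF W a(2)]
    by (auto simp: corner_vec_def intro!: corner_add corner_sum)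
  then have \<beta>: "\<beta> \<in> R" unfolding \<beta>_def using corner_vec_Suc_0[OF x] by simp
  have x_eq: "x i = z i + g i * \<beta>" if "i < Suc k" for i
  proof (cases i)
    case 0
    then show ?thesis using g(2) corner_left_unit[OF \<beta>] unfolding \<beta>_def by simp
  next
    case (Suc i')
    then have "eliminate g x i' = eliminate g z i'"
      using a(3) that unfolding z_def eliminate_lincomb by simp
    then have eq: "x i - g i * x 0 = z i - g i * z 0"
      unfolding eliminate_def Suc .
    have "x i = (x i - g i * x 0) + g i * x 0" by simp
    also have "\<dots> = z i + g i * \<beta>"
      unfolding eq \<beta>_def by (simp add: right_diff_distrib)
    finally show ?thesis .
  qed
  show "in_span (Suc k) (Suc N) (\<lambda>j. if j < N then H j else g) W x"
    unfolding in_span_def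
  proof (rule exI[of _ "\<lambda>j. if j < N then \<alpha> j else \<beta>"], rule exI[of _ w], intro conjI allI impI)
    fix i assume "i < Suc k"
    then show "x i = (\<Sum>j<Suc N. (if j < N then H j else g) i * (if j < N then \<alpha> j else \<beta>)) + w i"
      using x_eq unfolding z_def by (simp add: add_ac)
  qed (use a(1,2) \<beta> in auto)
qed

lemma sr_condition_normalize_last:
  assumes sr: "sr_condition R p N" and aR: "\<forall>j\<le>N. a j \<in> R"
    and sR: "\<forall>j<Suc N. s j \<in> R" and s: "(\<Sum>j<Suc N. a j * s j) = p"
  obtains d t where "\<forall>j<N. d j \<in> R" "\<forall>j<N. t j \<in> R"
    "a N + (\<Sum>j<N. (a j + a N * d j) * t j) = p"
proof -
  have "right_unimodular R p a (Suc N)"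
    unfolding right_unimodular_def using sR s by blast
  then obtain d s' where d: "\<forall>j<N. d j \<in> R" and s': "\<forall>j<N. s' j \<in> R"
    and ds: "(\<Sum>j<N. (a j + a N * d j) * s' j) = p"
    using sr aR unfolding sr_condition_def reducible_def right_unimodular_def by blast
  have aN: "a N \<in> R" using aR by simp
  have "(\<Sum>j<N. (a j + a N * d j) * (s' j * (p - a N)))
      = (\<Sum>j<N. (a j + a N * d j) * s' j) * (p - a N)"
    by (simp add: sum_distrib_right mult.assoc)
  also have "\<dots> = p * (p - a N)" by (simp only: ds)
  also have "\<dots> = p - a N"
    using idem corner_left_unit[OF aN] by (simp add: right_diff_distrib)
  finally show ?thesis
    using that[OF d, of "\<lambda>j. s' j * (p - a N)"] s' aN by simp
qed

lemma generates_first_column_reduce: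
  assumes sr: "sr_condition R p N"
    and W: "submodule (Suc k) W" and U: "submodule (Suc k) U"
    and v: "\<forall>j<N. corner_vec (Suc k) (v j)"
    and gen: "generates (Suc k) N v (module_sum W U)"
  obtains c u w s where "\<forall>j<N. c j \<in> R" "u \<in> U" "w \<in> W" "\<forall>j<N. s j \<in> R"
    "(\<Sum>j<N. (v j 0 + (w 0 + u 0) * c j) * s j) = p"
proof -
  have "corner_vec (Suc k) (\<lambda>i. if i = 0 then p else 0)"
    unfolding corner_vec_def by simp
  then obtain \<alpha> x where \<alpha>: "\<forall>j<N. \<alpha> j \<in> R" and x: "x \<in> module_sum W U"
    and e: "p = (\<Sum>j<N. v j 0 * \<alpha> j) + x 0"
    using gen unfolding generates_def in_span_def by fastforce
  obtain w u where wu: "x = (\<lambda>i. w i + u i)" "w \<in> W" "u \<in> U"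
    using x by (rule module_sumE)
  \<comment> \<open>The first column of v, extended by w 0 + u 0, is a unimodular row of length N + 1.\<close>
  define a where "a = (\<lambda>j. if j < N then v j 0 else w 0 + u 0)"
  have b: "w 0 + u 0 \<in> R"
    using submodule_vec[OF W wu(2)] submodule_vec[OF U wu(3)] by simp
  have "(\<Sum>j<Suc N. a j * (if j < N then \<alpha> j else p)) = p"
    unfolding a_def using e wu(1) corner_right_unit[OF b] by simp
  then have "right_unimodular R p a (Suc N)"
    unfolding right_unimodular_def using \<alpha> by (intro exI[of _ "\<lambda>j. if j < N then \<alpha> j else p"]) simp
  moreover have "\<forall>j\<le>N. a j \<in> R"
    unfolding a_def using v b by (simp add: corner_vec_def)
  ultimately obtain c s where "\<forall>j<N. c j \<in> R" "\<forall>j<N. s j \<in> R"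
    "(\<Sum>j<N. (a j + a N * c j) * s j) = p"
    using sr unfolding sr_condition_def reducible_def right_unimodular_def by blast
  moreover have "(\<Sum>j<N. (a j + a N * c j) * s j) = (\<Sum>j<N. (v j 0 + (w 0 + u 0) * c j) * s j)"
    unfolding a_def by simp
  ultimately show ?thesis using that wu(2,3) by simp
qed

lemma generates_dim_one:
  assumes W: "submodule (Suc 0) W" and sR: "\<forall>j<N. s j \<in> R" and s: "(\<Sum>j<N. v j 0 * s j) = p"
  shows "generates (Suc 0) N v W"
  unfolding generates_def in_span_def
proof (intro allI impI)
  fix x assume "corner_vec (Suc 0) x"
  then have x0: "x 0 \<in> R" by (simp add: corner_vec_def)
  have "(\<Sum>j<N. v j 0 * (s j * x 0)) = (\<Sum>j<N. v j 0 * s j) * x 0"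
    by (simp add: sum_distrib_right mult.assoc)
  also have "\<dots> = x 0" using s corner_left_unit[OF x0] by simp
  finally have "(\<Sum>j<N. v j 0 * (s j * x 0)) = x 0" .
  then show "\<exists>\<alpha> w. (\<forall>j<N. \<alpha> j \<in> R) \<and> w \<in> W \<and> (\<forall>i<Suc 0. x i = (\<Sum>j<N. v j i * \<alpha> j) + w i)"
    using sR x0 submodule_zero[OF W]
    by (intro exI[of _ "\<lambda>_. 0", THEN exI[of _ "\<lambda>j. s j * x 0"]]) auto
qed

lemma generates_column_ops:
  assumes M: "submodule k M" and E: "\<forall>j<Suc N. corner_vec k (E j)"
    and d: "\<forall>j<N. d j \<in> R" and t: "\<forall>j<N. t j \<in> R"
    and F: "\<forall>j<N. \<forall>i<k. F j i = E j i + E N i * d j"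
    and F_last: "\<forall>i<k. F N i = E N i + (\<Sum>j<N. F j i * t j)"
  shows "generates k (Suc N) E M \<longleftrightarrow> generates k (Suc N) F M"
proof -
  have "\<forall>j<N. corner_vec k (F j)"
    using E F d by (auto simp: corner_vec_def)
  then have F_vec: "\<forall>j<Suc N. corner_vec k (F j)"
    using E F_last t by (auto simp: corner_vec_def less_Suc_eq intro!: corner_add corner_sum)
  have E_gen: "\<And>j. j < Suc N \<Longrightarrow> in_span k (Suc N) E M (E j)"
    using in_span_generator E M by blast
  have F_gen: "\<And>j. j < Suc N \<Longrightarrow> in_span k (Suc N) F M (F j)"
    using in_span_generator F_vec M by blast
  have F_in_E: "\<forall>j<N. in_span k (Suc N) E M (F j)"
  proof (intro allI impI)
    fix j assume "j < N"
    then have "in_span k (Suc N) E M (\<lambda>i. E j i + E N i * d j)"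
      using in_span_add[OF M E_gen in_span_scale[OF M E_gen]] d by simp
    then show "in_span k (Suc N) E M (F j)"
      using F \<open>j < N\<close> by (auto intro: in_span_cong)
  qed
  have "in_span k (Suc N) E M (\<lambda>i. E N i + (\<Sum>j<N. F j i * t j))"
    using in_span_add[OF M E_gen in_span_lincomb[OF M F_in_E t]] by simp
  then have "in_span k (Suc N) E M (F N)"
    using F_last by (auto intro: in_span_cong)
  then have F_span: "\<forall>j<Suc N. in_span k (Suc N) E M (F j)"
    using F_in_E less_Suc_eq by auto
  have "in_span k (Suc N) F M (\<lambda>i. F N i - (\<Sum>j<N. F j i * t j))"
    using in_span_diff[OF M F_vec F_gen in_span_lincomb[OF M _ t]] F_gen by simp
  then have EN: "in_span k (Suc N) F M (E N)"
    using F_last by (auto intro: in_span_cong)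
  have "\<forall>j<N. in_span k (Suc N) F M (\<lambda>i. F j i - E N i * d j)"
    using in_span_diff[OF M F_vec F_gen in_span_scale[OF M EN]] d by simp
  then have "\<forall>j<N. in_span k (Suc N) F M (E j)"
    using F by (auto intro: in_span_cong)
  then have E_span: "\<forall>j<Suc N. in_span k (Suc N) F M (E j)"
    using EN less_Suc_eq by auto
  show ?thesis
    using generates_trans[OF M F_span] generates_trans[OF M E_span] by blast
qed

text \<open>The analogue for R^k of Bass's stable range condition: for k = 1, W = 0 and U = bR
  it says that every unimodular row (v_0, ..., v_(N-1), b) is reducible.\<close>

definition module_stable_range :: "nat \<Rightarrow> nat \<Rightarrow> bool" where
  "module_stable_range k N \<longleftrightarrow>
     (\<forall>v W U. (\<forall>j<N. corner_vec k (v j)) \<longrightarrow> submodule k W \<longrightarrow> submodule k U \<longrightarrow>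
        generates k N v (module_sum W U) \<longrightarrow>
        (\<exists>\<mu>. (\<forall>j<N. \<mu> j \<in> U) \<and> generates k N (\<lambda>j i. v j i + \<mu> j i) W))"

lemma module_stable_range_zero_dim: "module_stable_range 0 N"
  unfolding module_stable_range_def
  by (auto intro!: exI[of _ "\<lambda>_ _. 0"] generates_zero_dim simp: submodule_zero)

lemma module_stable_rangeD:
  assumes "module_stable_range k N" "\<forall>j<N. corner_vec k (v j)"
    "submodule k W" "submodule k U" "generates k N v (module_sum W U)"
  obtains \<mu> where "\<forall>j<N. \<mu> j \<in> U" "generates k N (\<lambda>j i. v j i + \<mu> j i) W"
  using assms unfolding module_stable_range_def by blast

lemma generates_pivot:
  assumes IH: "module_stable_range k N"
    and g: "corner_vec (Suc k) g" "g 0 = p" and G: "\<forall>j<N. corner_vec (Suc k) (G j)"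
    and W: "submodule (Suc k) W" and U: "submodule (Suc k) U"
    and gen: "generates (Suc k) (Suc N) (\<lambda>j. if j < N then G j else g) (module_sum W U)"
  obtains u where "\<forall>j<N. u j \<in> U"
    "generates (Suc k) (Suc N) (\<lambda>j. if j < N then (\<lambda>i. G j i + u j i) else g) W"
proof -
  have "generates k N (\<lambda>j. eliminate g (if j < N then G j else g)) (eliminate g ` module_sum W U)"
    using generates_eliminate[OF g _ gen] by simp
  then have "generates k N (\<lambda>j. eliminate g (G j)) (eliminate g ` module_sum W U)"
    by (rule generates_cong[THEN iffD1, rotated]) simp
  then have gen_elim: "generates k N (\<lambda>j. eliminate g (G j))
      (module_sum (eliminate g ` W) (eliminate g ` U))"
    by (rule generates_mono[OF eliminate_module_sum])
  have "\<forall>j<N. corner_vec k (eliminate g (G j))"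
    using eliminate_corner_vec[OF g(1)] G by blast
  then obtain \<mu> where \<mu>: "\<forall>j<N. \<mu> j \<in> eliminate g ` U"
    and gen': "generates k N (\<lambda>j i. eliminate g (G j) i + \<mu> j i) (eliminate g ` W)"
    using module_stable_rangeD[OF IH _ submodule_eliminate[OF W g(1)]
        submodule_eliminate[OF U g(1)] gen_elim] by blast
  have "\<forall>j\<in>{..<N}. \<exists>x. x \<in> U \<and> \<mu> j = eliminate g x"
    using \<mu> by blast
  from bchoice[OF this] obtain u where u: "\<forall>j<N. u j \<in> U \<and> \<mu> j = eliminate g (u j)"
    by auto
  have "generates k N (\<lambda>j. eliminate g (\<lambda>i. G j i + u j i)) (eliminate g ` W)"
    using gen' by (rule generates_cong[THEN iffD1, rotated]) (use u in \<open>simp add: eliminate_add\<close>)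
  moreover have "\<forall>j<N. corner_vec (Suc k) (\<lambda>i. G j i + u j i)"
    using G u submodule_vec[OF U] by (simp add: corner_vec_def)
  ultimately have "generates (Suc k) (Suc N) (\<lambda>j. if j < N then (\<lambda>i. G j i + u j i) else g) W"
    by (intro generates_lift[OF g _ W])
  with u that show ?thesis by blast
qed

lemma generates_undo_column_ops:
  assumes W: "submodule (Suc k) W" and U: "submodule (Suc k) U"
    and v: "\<forall>j<Suc N. corner_vec (Suc k) (v j)"
    and d: "\<forall>j<N. d j \<in> R" and t: "\<forall>j<N. t j \<in> R" and u: "\<forall>j<N. u j \<in> U"
    and gen: "generates (Suc k) (Suc N) (\<lambda>j. if j < N then (\<lambda>i. v j i + v N i * d j + u j i)
      else (\<lambda>i. v N i + (\<Sum>j<N. (v j i + v N i * d j) * t j))) W"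
  shows "\<exists>\<mu>. (\<forall>j<Suc N. \<mu> j \<in> U) \<and> generates (Suc k) (Suc N) (\<lambda>j i. v j i + \<mu> j i) W"
proof -
  define m where "m i = - (\<Sum>j<N. u j i * t j)" for i
  define \<mu> where "\<mu> j = (if j < N then (\<lambda>i. u j i - m i * d j) else m)" for j
  have m: "m \<in> U"
    using submodule_lincomb[OF U, of "{..<N}" u "\<lambda>j. - t j"] u t
    unfolding m_def by (simp add: sum_negf)
  have \<mu>: "\<forall>j<Suc N. \<mu> j \<in> U"
  proof (intro allI impI)
    fix j assume "j < Suc N"
    have "(\<lambda>i. u j i + m i * (- d j)) \<in> U" if "j < N"
      by (rule submodule_add[OF U _ submodule_scale[OF U m]]) (use u d that in simp_all)
    then show "\<mu> j \<in> U" unfolding \<mu>_def using m by (simp add: \<open>j < Suc N\<close>)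
  qed
  have "\<forall>j<Suc N. corner_vec (Suc k) (\<lambda>i. v j i + \<mu> j i)"
    using v \<mu> submodule_vec[OF U] by (simp add: corner_vec_def)
  moreover have "\<forall>j<N. \<forall>i<Suc k. v j i + v N i * d j + u j i = (v j i + \<mu> j i) + (v N i + \<mu> N i) * d j"
    unfolding \<mu>_def by (simp add: algebra_simps)
  moreover have "\<forall>i<Suc k. v N i + (\<Sum>j<N. (v j i + v N i * d j) * t j) =
      (v N i + \<mu> N i) + (\<Sum>j<N. (v j i + v N i * d j + u j i) * t j)"
    unfolding \<mu>_def m_def by (simp add: distrib_right sum.distrib)
  ultimately have "generates (Suc k) (Suc N) (\<lambda>j i. v j i + \<mu> j i) W"
    using gen generates_column_ops[OF W _ d t, where F="\<lambda>j. if j < N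
      then (\<lambda>i. v j i + v N i * d j + u j i) else (\<lambda>i. v N i + (\<Sum>j<N. (v j i + v N i * d j) * t j))"]
    by simp
  then show ?thesis using \<mu> by blast
qed

lemma generates_unimodular_column:
  assumes sr: "sr_condition R p N" and IH: "module_stable_range k N"
    and W: "submodule (Suc k) W" and U: "submodule (Suc k) U"
    and v: "\<forall>j<Suc N. corner_vec (Suc k) (v j)"
    and sR: "\<forall>j<Suc N. s j \<in> R" and s: "(\<Sum>j<Suc N. v j 0 * s j) = p"
    and gen: "generates (Suc k) (Suc N) v (module_sum W U)"
  shows "\<exists>\<mu>. (\<forall>j<Suc N. \<mu> j \<in> U) \<and> generates (Suc k) (Suc N) (\<lambda>j i. v j i + \<mu> j i) W"
proof -
  obtain d t where d: "\<forall>j<N. d j \<in> R" and t: "\<forall>j<N. t j \<in> R"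
    and dt: "v N 0 + (\<Sum>j<N. (v j 0 + v N 0 * d j) * t j) = p"
    using sr_condition_normalize_last[OF sr _ sR s] v by (auto simp: corner_vec_def)
  \<comment> \<open>Column operations turn the last generator into g with g 0 = p.\<close>
  define G where "G j i = v j i + v N i * d j" for j i
  define g where "g i = v N i + (\<Sum>j<N. G j i * t j)" for i
  have G_vec: "\<forall>j<N. corner_vec (Suc k) (G j)"
    using v d unfolding G_def by (auto simp: corner_vec_def)
  have g_vec: "corner_vec (Suc k) g"
    using v G_vec t unfolding g_def by (auto simp: corner_vec_def intro!: corner_add corner_sum)
  have g0: "g 0 = p" using dt unfolding g_def G_def .
  have "generates (Suc k) (Suc N) (\<lambda>j. if j < N then G j else g) (module_sum W U)"
    using gen generates_column_ops[OF submodule_module_sum[OF W U] v d t]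
    unfolding G_def g_def by simp
  then obtain u where u: "\<forall>j<N. u j \<in> U"
    and "generates (Suc k) (Suc N) (\<lambda>j. if j < N then (\<lambda>i. G j i + u j i) else g) W"
    using generates_pivot[OF IH g_vec g0 G_vec W U] by blast
  then show ?thesis
    unfolding G_def g_def by (rule generates_undo_column_ops[OF W U v d t])
qed

lemma module_stable_range_Suc:
  assumes sr: "sr_condition R p N"
    and unimodular_column: "\<And>v W U s. \<forall>j<N. corner_vec (Suc k) (v j) \<Longrightarrow>
      submodule (Suc k) W \<Longrightarrow> submodule (Suc k) U \<Longrightarrow>
      \<forall>j<N. s j \<in> R \<Longrightarrow> (\<Sum>j<N. v j 0 * s j) = p \<Longrightarrow>
      generates (Suc k) N v (module_sum W U) \<Longrightarrow>
      \<exists>\<mu>. (\<forall>j<N. \<mu> j \<in> U) \<and> generates (Suc k) N (\<lambda>j i. v j i + \<mu> j i) W"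
  shows "module_stable_range (Suc k) N"
  unfolding module_stable_range_def
proof (intro allI impI)
  fix v W U
  assume v: "\<forall>j<N. corner_vec (Suc k) (v j)" and W: "submodule (Suc k) W"
    and U: "submodule (Suc k) U" and gen: "generates (Suc k) N v (module_sum W U)"
  have WU: "submodule (Suc k) (module_sum W U)" using submodule_module_sum[OF W U] .
  obtain c u w s where c: "\<forall>j<N. c j \<in> R" and u: "u \<in> U" and w: "w \<in> W"
    and sR: "\<forall>j<N. s j \<in> R" and s: "(\<Sum>j<N. (v j 0 + (w 0 + u 0) * c j) * s j) = p"
    using generates_first_column_reduce[OF sr W U v gen] by blast
  \<comment> \<open>Shifting by multiples of w + u makes the first column unimodular.\<close>
  define v' where "v' j i = v j i + (w i + u i) * c j" for j i
  have v': "\<forall>j<N. corner_vec (Suc k) (v' j)"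
    using v c submodule_vec[OF W w] submodule_vec[OF U u]
    unfolding v'_def by (simp add: corner_vec_def)
  have "\<forall>j<N. (\<lambda>i. (w i + u i) * - c j) \<in> module_sum W U"
    using c by (intro allI impI submodule_scale[OF WU module_sumI[OF w u]]) simp
  then have "generates (Suc k) N v' (module_sum W U)"
    by (rule generates_perturb[OF WU v' _ _ gen]) (simp add: v'_def)
  moreover have "(\<Sum>j<N. v' j 0 * s j) = p"
    using s unfolding v'_def by (simp add: algebra_simps)
  ultimately obtain \<mu>' where \<mu>': "\<forall>j<N. \<mu>' j \<in> U"
    and gen_\<mu>': "generates (Suc k) N (\<lambda>j i. v' j i + \<mu>' j i) W"
    using unimodular_column[OF v' W U sR] by blast
  define \<mu> where "\<mu> j i = u i * c j + \<mu>' j i" for j i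
  have "\<forall>j<N. \<mu> j \<in> U"
    using submodule_add[OF U submodule_scale[OF U u]] c \<mu>' unfolding \<mu>_def by simp
  moreover have "generates (Suc k) N (\<lambda>j i. v j i + \<mu> j i) W"
  proof (rule generates_perturb[OF W _ _ _ gen_\<mu>'])
    show "\<forall>j<N. corner_vec (Suc k) (\<lambda>i. v j i + \<mu> j i)"
      using v c u \<mu>' submodule_vec[OF U] unfolding \<mu>_def by (simp add: corner_vec_def)
    show "\<forall>j<N. (\<lambda>i. w i * c j) \<in> W"
      using submodule_scale[OF W w] c by simp
  qed (simp add: v'_def \<mu>_def algebra_simps)
  ultimately show "\<exists>\<mu>. (\<forall>j<N. \<mu> j \<in> U) \<and> generates (Suc k) N (\<lambda>j i. v j i + \<mu> j i) W"
    by blast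
qed

lemma module_stable_range_if_sr_condition:
  assumes sr: "sr_condition R p n" and "n + k \<le> Suc N"
  shows "module_stable_range k N"
  using assms(2)
proof (induction k arbitrary: N)
  case 0
  show ?case by (rule module_stable_range_zero_dim)
next
  case (Suc k)
  have "sr_condition R p N" using sr_condition_mono[OF sr] Suc.prems by simp
  then show ?case
  proof (rule module_stable_range_Suc)
    fix v W U s
    assume v: "\<forall>j<N. corner_vec (Suc k) (v j)" and W: "submodule (Suc k) W"
      and U: "submodule (Suc k) U" and sR: "\<forall>j<N. s j \<in> R" and s: "(\<Sum>j<N. v j 0 * s j) = p"
      and gen: "generates (Suc k) N v (module_sum W U)"
    show "\<exists>\<mu>. (\<forall>j<N. \<mu> j \<in> U) \<and> generates (Suc k) N (\<lambda>j i. v j i + \<mu> j i) W"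
    proof (cases k)
      case 0
      then have "generates (Suc k) N (\<lambda>j i. v j i + 0) W"
        using generates_dim_one[where v=v, OF _ sR s] W by simp
      then show ?thesis using submodule_zero[OF U] by (intro exI[of _ "\<lambda>_ _. 0"]) simp
    next
      case (Suc k')
      then obtain N' where N: "N = Suc N'" using Suc.prems by (cases N) auto
      have "sr_condition R p N'" using sr_condition_mono[OF sr] Suc.prems N \<open>k = Suc k'\<close> by simp
      moreover have "module_stable_range k N'" using Suc.IH[of N'] Suc.prems N by simp
      ultimately show ?thesis
        unfolding N by (rule generates_unimodular_column[OF _ _ W U]) (use v sR s gen N in simp_all)
    qed
  qed
qed

lemma linear_functional_in_right_ideal:
  assumes J: "right_ideal J" and x: "in_span k N F M x"
    and F: "\<forall>j<N. (\<Sum>l<k. g l * F j l) \<in> J" and M: "\<forall>w\<in>M. (\<Sum>l<k. g l * w l) \<in> J"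
  shows "(\<Sum>l<k. g l * x l) \<in> J"
proof -
  obtain \<alpha> w where "w \<in> M" and x_eq: "\<forall>l<k. x l = (\<Sum>j<N. F j l * \<alpha> j) + w l"
    using x unfolding in_span_def by blast
  have "(\<Sum>l<k. g l * x l) = (\<Sum>l<k. \<Sum>j<N. g l * F j l * \<alpha> j) + (\<Sum>l<k. g l * w l)"
    using x_eq by (simp add: distrib_left sum.distrib sum_distrib_left mult.assoc)
  also have "(\<Sum>l<k. \<Sum>j<N. g l * F j l * \<alpha> j) = (\<Sum>j<N. (\<Sum>l<k. g l * F j l) * \<alpha> j)"
    by (subst sum.swap) (simp add: sum_distrib_right)
  moreover have "(\<Sum>j<N. (\<Sum>l<k. g l * F j l) * \<alpha> j) \<in> J"
    using J F by (intro right_ideal_sum) (auto simp: right_ideal_def)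
  ultimately show ?thesis
    using J M \<open>w \<in> M\<close> unfolding right_ideal_def by simp
qed

end

locale full_corner_row = idempotent +
  fixes a b e f :: "nat \<Rightarrow> 'a" and n m :: nat
  assumes n_pos: "1 \<le> n"
    and row_inverse: "(\<Sum>i<Suc n. a i * b i) = 1"
    and full: "(\<Sum>l<m. e l * p * f l) = 1"
begin

text \<open>embed and retract exhibit the right R-module Ap as a direct summand of R^m:
  retract (embed y) = y p.\<close>

definition embed :: "'a \<Rightarrow> nat \<Rightarrow> 'a" where
  "embed y = (\<lambda>l. p * f l * y * p)"

definition retract :: "(nat \<Rightarrow> 'a) \<Rightarrow> 'a" where
  "retract x = (\<Sum>l<m. e l * p * x l)"

lemma embed_corner_vec: "corner_vec k (embed y)"
proof -
  have "embed y l = p * (f l * y) * p" for l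
    unfolding embed_def by (simp add: mult.assoc)
  then show ?thesis unfolding corner_vec_def using corner_sandwich by simp
qed

lemma embed_add: "embed (y + y') = (\<lambda>l. embed y l + embed y' l)"
  unfolding embed_def by (simp add: algebra_simps)

lemma embed_sum: "embed (\<Sum>i\<in>F. y i) = (\<lambda>l. \<Sum>i\<in>F. embed (y i) l)"
  unfolding embed_def by (simp add: sum_distrib_left sum_distrib_right)

lemma embed_mult_p: "embed (y * p) = embed y"
  unfolding embed_def by (simp add: mult.assoc idem)

lemma embed_scale: "r \<in> R \<Longrightarrow> (\<lambda>l. embed y l * r) = embed (y * r)"
  unfolding embed_def using corner_left_unit corner_right_unit by (simp add: mult.assoc)

lemma retract_embed: "retract (embed y) = y * p"
proof -
  have "retract (embed y) = (\<Sum>l<m. e l * p * f l) * y * p"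
    unfolding retract_def embed_def by (simp add: sum_distrib_right mult.assoc idem)
  then show ?thesis using full by simp
qed

lemma submodule_embed:
  assumes "right_ideal J"
  shows "submodule k (embed ` J)"
  unfolding submodule_def
proof (intro conjI ballI)
  fix x assume "x \<in> embed ` J"
  then show "corner_vec k x" using embed_corner_vec by blast
next
  have "(\<lambda>_. 0) = embed 0" by (simp add: embed_def)
  then show "(\<lambda>_. 0) \<in> embed ` J"
    using assms unfolding right_ideal_def by blast
next
  fix x y assume "x \<in> embed ` J" "y \<in> embed ` J"
  then show "(\<lambda>i. x i + y i) \<in> embed ` J"
    using assms unfolding right_ideal_def by (auto simp: embed_add[symmetric])
next
  fix x r assume "x \<in> embed ` J" "r \<in> R"
  then show "(\<lambda>i. x i * r) \<in> embed ` J"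
    using assms unfolding right_ideal_def by (auto simp: embed_scale)
qed

text \<open>Generator j for j < m is a perturbed unit vector; generator (m + i - 1) belongs to a_i,
  0 < i < n.\<close>

definition generator :: "nat \<Rightarrow> nat \<Rightarrow> 'a" where
  "generator j =
     (if j < m then (\<lambda>l. (if l = j then p else 0) + embed ((a 0 - 1) * e j * p) l)
      else embed (a (j - m + 1) * p))"

definition Wmod :: "(nat \<Rightarrow> 'a) set" where
  "Wmod = embed ` row_ideal (\<lambda>i. a i * (1 - p)) {1..<n}"

definition Umod :: "(nat \<Rightarrow> 'a) set" where
  "Umod = embed ` range ((*) (a n))"

lemma submodule_Wmod: "submodule m Wmod"
  unfolding Wmod_def by (rule submodule_embed[OF right_ideal_row_ideal])

lemma submodule_Umod: "submodule m Umod"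
proof -
  have "right_ideal (range ((*) (a n)))"
    unfolding right_ideal_def
  proof (intro conjI ballI allI)
    show "0 \<in> range ((*) (a n))" using rangeI[of "(*) (a n)" 0] by simp
  next
    fix x y assume "x \<in> range ((*) (a n))" "y \<in> range ((*) (a n))"
    then obtain s t where "x = a n * s" "y = a n * t" by blast
    then show "x + y \<in> range ((*) (a n))"
      using rangeI[of "(*) (a n)" "s + t"] by (simp add: distrib_left)
  next
    fix x t assume "x \<in> range ((*) (a n))"
    then obtain s where "x = a n * s" by blast
    then show "x * t \<in> range ((*) (a n))"
      using rangeI[of "(*) (a n)" "s * t"] by (simp add: mult.assoc)
  qed
  then show ?thesis unfolding Umod_def by (rule submodule_embed)
qed

lemma generator_corner_vec: "corner_vec m (generator j)"
  using embed_corner_vec unfolding generator_def corner_vec_def by auto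

lemma generators_lincomb:
  assumes x: "corner_vec m x" and l: "l < m"
  shows "(\<Sum>j<m. generator j l * x j) = x l + embed ((a 0 - 1) * retract x) l"
proof -
  have px: "p * x j = x j" "x j * p = x j" if "j < m" for j
    using x that corner_left_unit corner_right_unit unfolding corner_vec_def by auto
  have "generator j l * x j =
      (if l = j then x j else 0) + p * f l * (a 0 - 1) * (e j * p * x j)" if "j < m" for j
    using that px unfolding generator_def embed_def by (simp add: algebra_simps)
  then have "(\<Sum>j<m. generator j l * x j) = x l + p * f l * (a 0 - 1) * retract x"
    using l unfolding retract_def by (simp add: sum.distrib sum_distrib_left)
  moreover have "retract x * p = retract x"
    unfolding retract_def using px by (simp add: sum_distrib_right mult.assoc)
  ultimately show ?thesis unfolding embed_def by (simp add: mult.assoc)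
qed

lemma in_span_generators_first:
  assumes M: "submodule m M" and x: "corner_vec m x"
  shows "in_span m (m + n - 1) generator M (\<lambda>l. x l + embed ((a 0 - 1) * retract x) l)"
proof -
  have "\<forall>j<m. in_span m (m + n - 1) generator M (generator j)"
    using n_pos by (auto intro!: in_span_generator generator_corner_vec M)
  then have "in_span m (m + n - 1) generator M (\<lambda>l. \<Sum>j<m. generator j l * x j)"
    using in_span_lincomb[OF M] x by (simp add: corner_vec_def)
  then show ?thesis
    using generators_lincomb[OF x] by (auto intro: in_span_cong)
qed

lemma in_span_embed_first:
  assumes M: "submodule m M"
  shows "in_span m (m + n - 1) generator M (embed (a 0 * y))"
proof -
  have "embed y l + embed ((a 0 - 1) * retract (embed y)) l = embed (a 0 * y) l" for l
    unfolding retract_embed unfolding embed_def by (simp add: algebra_simps idem)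
  then show ?thesis
    using in_span_generators_first[OF M embed_corner_vec] by (auto intro: in_span_cong)
qed

lemma in_span_embed_middle:
  assumes M: "submodule m M" and i: "1 \<le> i" "i < n"
  shows "in_span m (m + n - 1) generator M (embed (a i * p * y))"
proof -
  have j: "m + i - 1 < m + n - 1" and "generator (m + i - 1) = embed (a i * p)"
    using i unfolding generator_def by auto
  moreover have "in_span m (m + n - 1) generator M (generator (m + i - 1))"
    by (rule in_span_generator[OF j generator_corner_vec M])
  ultimately have "in_span m (m + n - 1) generator M (\<lambda>l. embed (a i * p) l * (p * y * p))"
    using in_span_scale[OF M _ corner_sandwich] by simp
  moreover have "(\<lambda>l. embed (a i * p) l * (p * y * p)) = embed (a i * p * (p * y * p))"
    by (rule embed_scale[OF corner_sandwich])
  also have "\<dots> = embed (a i * p * y * p)"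
    by (simp add: mult.assoc)
  also have "\<dots> = embed (a i * p * y)"
    by (rule embed_mult_p)
  ultimately show ?thesis by simp
qed

lemma embed_row_decomposition:
  "embed y = (\<lambda>l. embed (a 0 * (b 0 * y)) l + (\<Sum>i\<in>{1..<n}. embed (a i * p * (b i * y)) l)
     + (embed (\<Sum>i\<in>{1..<n}. a i * (1 - p) * (b i * y)) l + embed (a n * (b n * y)) l))"
proof -
  have "y = (\<Sum>i<Suc n. a i * b i) * y" using row_inverse by simp
  also have "\<dots> = (\<Sum>i<Suc n. a i * (b i * y))"
    by (simp only: sum_distrib_right mult.assoc)
  also have "\<dots> = a 0 * (b 0 * y) + (\<Sum>i\<in>{1..<n}. a i * (p + (1 - p)) * (b i * y)) + a n * (b n * y)"
    by (subst sum_split_first_last[OF n_pos]) simp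
  also have "\<dots> = a 0 * (b 0 * y) + (\<Sum>i\<in>{1..<n}. a i * p * (b i * y))
      + ((\<Sum>i\<in>{1..<n}. a i * (1 - p) * (b i * y)) + a n * (b n * y))"
    by (simp add: sum.distrib[symmetric] algebra_simps)
  finally show ?thesis
    by (metis embed_add embed_sum)
qed

lemma in_span_embed: "in_span m (m + n - 1) generator (module_sum Wmod Umod) (embed y)"
proof -
  let ?M = "module_sum Wmod Umod"
  have M: "submodule m ?M" by (rule submodule_module_sum[OF submodule_Wmod submodule_Umod])
  have "in_span m (m + n - 1) generator ?M (\<lambda>l. \<Sum>i\<in>{1..<n}. embed (a i * p * (b i * y)) l)"
    using in_span_embed_middle[OF M] by (intro in_span_sum[OF M]) auto
  moreover have "(\<lambda>l. embed (\<Sum>i\<in>{1..<n}. a i * (1 - p) * (b i * y)) l + embed (a n * (b n * y)) l)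
      \<in> ?M"
    unfolding Wmod_def Umod_def
    by (intro module_sumI imageI rangeI row_idealI[where q="\<lambda>i. b i * y"]) (simp add: mult.assoc)
  ultimately show ?thesis
    using in_span_add[OF M in_span_add[OF M in_span_embed_first[OF M]] in_span_module]
    by (subst embed_row_decomposition) blast
qed

lemma generators_span: "generates m (m + n - 1) generator (module_sum Wmod Umod)"
  unfolding generates_def
proof (intro allI impI)
  fix x assume x: "corner_vec m x"
  have M: "submodule m (module_sum Wmod Umod)"
    by (rule submodule_module_sum[OF submodule_Wmod submodule_Umod])
  have "in_span m (m + n - 1) generator (module_sum Wmod Umod)
      (\<lambda>l. (x l + embed ((a 0 - 1) * retract x) l) + embed ((1 - a 0) * retract x) l)"
    using in_span_add[OF M in_span_generators_first[OF M x] in_span_embed] .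
  moreover have "(x l + embed ((a 0 - 1) * retract x) l) + embed ((1 - a 0) * retract x) l = x l" for l
    unfolding embed_def by (simp add: algebra_simps)
  ultimately show "in_span m (m + n - 1) generator (module_sum Wmod Umod) x" by simp
qed

text \<open>The corrected generators are generator j + embed (a_n z_j). The functional inverts embed
  and maps each corrected generator into the right ideal generated by the a_i + a_n c_i.\<close>

definition reduction_coeff :: "(nat \<Rightarrow> 'a) \<Rightarrow> nat \<Rightarrow> 'a" where
  "reduction_coeff z i = (if i = 0 then (\<Sum>l<m. z l * p * f l) else z (m + i - 1) * p)"

definition reduction_functional :: "(nat \<Rightarrow> 'a) \<Rightarrow> (nat \<Rightarrow> 'a) \<Rightarrow> 'a" where
  "reduction_functional z x =
     (\<Sum>l<m. ((1 + a n * reduction_coeff z 0) * e l * p - a n * z l * p) * x l)"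

abbreviation reduced_ideal :: "(nat \<Rightarrow> 'a) \<Rightarrow> 'a set" where
  "reduced_ideal z \<equiv> row_ideal (\<lambda>i. a i + a n * reduction_coeff z i) {..<n}"

lemma reduction_functional_embed: "reduction_functional z (embed y) = y * p"
proof -
  let ?c = "reduction_coeff z 0"
  have "((1 + a n * ?c) * e l * p - a n * z l * p) * embed y l =
      ((1 + a n * ?c) * (e l * p * f l) - a n * (z l * p * f l)) * y * p" for l
    unfolding embed_def by (simp add: algebra_simps)
  then have "reduction_functional z (embed y) =
      ((1 + a n * ?c) * (\<Sum>l<m. e l * p * f l) - a n * (\<Sum>l<m. z l * p * f l)) * y * p"
    unfolding reduction_functional_def
    by (simp add: sum_distrib_left sum_distrib_right sum_subtractf left_diff_distrib)
  then show ?thesis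
    unfolding full by (simp add: reduction_coeff_def algebra_simps)
qed

lemma reduction_functional_add:
  "reduction_functional z (\<lambda>l. x l + y l) = reduction_functional z x + reduction_functional z y"
  unfolding reduction_functional_def by (simp add: distrib_left sum.distrib)

lemma reduction_functional_first_generator:
  assumes "j < m"
  shows "reduction_functional z (\<lambda>l. generator j l + embed (a n * z j) l) =
    (a 0 + a n * reduction_coeff z 0) * (e j * p)"
proof -
  let ?c = "reduction_coeff z 0"
  have "reduction_functional z (\<lambda>l. if l = j then p else 0) =
      (1 + a n * ?c) * e j * p - a n * z j * p"
    unfolding reduction_functional_def using assms
    by (simp add: if_distrib cong: if_cong) (simp add: algebra_simps idem)
  moreover have "(\<lambda>l. generator j l + embed (a n * z j) l) =
      (\<lambda>l. (\<lambda>l. if l = j then p else 0) l + embed ((a 0 - 1) * e j * p + a n * z j) l)"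
    using assms unfolding generator_def by (simp add: embed_add add.assoc)
  ultimately show ?thesis
    by (simp add: reduction_functional_add reduction_functional_embed algebra_simps idem)
qed

lemma reduction_functional_middle_generator:
  assumes "1 \<le> i" "i < n"
  shows "reduction_functional z (\<lambda>l. generator (m + i - 1) l + embed (a n * z (m + i - 1)) l) =
    (a i + a n * reduction_coeff z i) * p"
proof -
  have "\<not> m + i - 1 < m" "m + i - 1 - m + 1 = i" using assms by auto
  then have "(\<lambda>l. generator (m + i - 1) l + embed (a n * z (m + i - 1)) l) =
      embed (a i * p + a n * z (m + i - 1))"
    unfolding generator_def by (simp add: embed_add)
  then show ?thesis
    using assms by (simp add: reduction_functional_embed reduction_coeff_def algebra_simps idem)
qed

lemma reduction_functional_generator_in_reduced_ideal:
  assumes "j < m + n - 1"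
  shows "reduction_functional z (\<lambda>l. generator j l + embed (a n * z j) l) \<in> reduced_ideal z"
proof (cases "j < m")
  case True
  then show ?thesis
    using reduction_functional_first_generator row_ideal_entry[of "{..<n}" 0] n_pos by simp
next
  case False
  then obtain i where "j = m + i - 1" "1 \<le> i" "i < n"
    using assms by (intro that[of "j - m + 1"]) auto
  then show ?thesis
    using reduction_functional_middle_generator row_ideal_entry[of "{..<n}" i] by simp
qed

lemma reduction_functional_Wmod_in_reduced_ideal:
  assumes "w \<in> Wmod"
  shows "reduction_functional z w \<in> reduced_ideal z"
proof -
  obtain q where w: "w = embed (\<Sum>i\<in>{1..<n}. a i * (1 - p) * q i)"
    using assms unfolding Wmod_def row_ideal_def by blast
  \<comment> \<open>For i \<ge> 1 the coefficient c_i ends in p, so a_n c_i vanishes on (1 - p) A.\<close>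
  have "a i * (1 - p) * q i * p = (a i + a n * reduction_coeff z i) * ((1 - p) * q i * p)"
    if "i \<in> {1..<n}" for i
    using that unfolding reduction_coeff_def by (simp add: algebra_simps idem)
  then have "reduction_functional z w =
      (\<Sum>i\<in>{1..<n}. (a i + a n * reduction_coeff z i) * ((1 - p) * q i * p))"
    unfolding w reduction_functional_embed sum_distrib_right by simp
  also have "\<dots> \<in> reduced_ideal z"
    by (intro right_ideal_sum[OF right_ideal_row_ideal] row_ideal_entry) auto
  finally show ?thesis .
qed

lemma corrected_generators_reduce:
  assumes gen: "generates m (m + n - 1) (\<lambda>j l. generator j l + embed (a n * z j) l) Wmod"
  shows "1 \<in> reduced_ideal z"
proof -
  have yp: "y * p \<in> reduced_ideal z" for y
  proof -
    have "in_span m (m + n - 1) (\<lambda>j l. generator j l + embed (a n * z j) l) Wmod (embed y)"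
      using gen embed_corner_vec unfolding generates_def by blast
    then have "reduction_functional z (embed y) \<in> reduced_ideal z"
      unfolding reduction_functional_def
      by (rule linear_functional_in_right_ideal[OF right_ideal_row_ideal])
        (use reduction_functional_generator_in_reduced_ideal
          reduction_functional_Wmod_in_reduced_ideal in \<open>auto simp: reduction_functional_def\<close>)
    then show ?thesis by (simp add: reduction_functional_embed)
  qed
  have "e l * p * f l \<in> reduced_ideal z" for l
    using yp[of "e l"] right_ideal_row_ideal unfolding right_ideal_def by blast
  then have "(\<Sum>l<m. e l * p * f l) \<in> reduced_ideal z"
    by (intro right_ideal_sum[OF right_ideal_row_ideal])
  then show ?thesis using full by simp
qed

lemma unimodular_row_reducible:
  assumes sr: "sr_condition R p n"
  shows "\<exists>c. right_unimodular UNIV 1 (\<lambda>i. a i + a n * c i) n"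
proof -
  have "module_stable_range m (m + n - 1)"
    using module_stable_range_if_sr_condition[OF sr] n_pos by simp
  moreover have "\<forall>j<m + n - 1. corner_vec m (generator j)"
    using generator_corner_vec by blast
  ultimately obtain \<mu> where \<mu>: "\<forall>j<m + n - 1. \<mu> j \<in> Umod"
    and gen: "generates m (m + n - 1) (\<lambda>j l. generator j l + \<mu> j l) Wmod"
    by (rule module_stable_rangeD[OF _ _ submodule_Wmod submodule_Umod generators_span])
  have "\<forall>j\<in>{..<m + n - 1}. \<exists>y. \<mu> j = embed (a n * y)"
    using \<mu> unfolding Umod_def by blast
  from bchoice[OF this] obtain z where z: "\<forall>j<m + n - 1. \<mu> j = embed (a n * z j)"
    by auto
  have "generates m (m + n - 1) (\<lambda>j l. generator j l + embed (a n * z j) l) Wmod"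
    using gen by (rule generates_cong[THEN iffD1, rotated]) (simp add: z)
  then have "1 \<in> reduced_ideal z" by (rule corrected_generators_reduce)
  then show ?thesis unfolding right_unimodular_iff_row_ideal by blast
qed

end

lemma sr_condition_ambient_if_corner:
  fixes p :: "'a::ring_1"
  assumes p: "full_idempotent p" and n: "1 \<le> n" and sr: "sr_condition (corner p) p n"
  shows "sr_condition (UNIV :: 'a set) 1 n"
  unfolding sr_condition_def
proof (intro allI impI)
  fix a :: "nat \<Rightarrow> 'a"
  assume "right_unimodular UNIV 1 a (Suc n)"
  then obtain b where ab: "(\<Sum>i<Suc n. a i * b i) = 1"
    unfolding right_unimodular_def by blast
  have "1 \<in> two_sided_ideal_gen p" using p unfolding full_idempotent_def by simp
  then obtain m e f where "1 = (\<Sum>l<(m::nat). e l * p * f l)"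
    unfolding two_sided_ideal_gen_def by blast
  then interpret full_corner_row p a b e f n m
    using p n ab unfolding full_idempotent_def by unfold_locales simp_all
  show "reducible UNIV 1 a n"
    using unimodular_row_reducible[OF sr] unfolding reducible_def by blast
qed

theorem theorem7:
  fixes p :: "'a::ring_1"
  assumes "full_idempotent p"
  shows "stable_rank (UNIV :: 'a set) 1 \<le> stable_rank (corner p) p"
proof (cases "\<exists>n. 1 \<le> n \<and> sr_condition (corner p) p n")
  case False
  then have "stable_rank (corner p) p = \<infinity>"
    unfolding stable_rank_def by (simp only: if_False)
  then show ?thesis by simp
next
  case True
  define n where "n = (LEAST n. 1 \<le> n \<and> sr_condition (corner p) p n)"
  have n: "1 \<le> n" "sr_condition (corner p) p n"
    using LeastI_ex[OF True] unfolding n_def by auto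
  have "stable_rank (UNIV :: 'a set) 1 \<le> enat n"
    using stable_rank_le sr_condition_ambient_if_corner[OF assms n] n(1) by blast
  also have "enat n = stable_rank (corner p) p"
    unfolding stable_rank_def n_def using True by simp
  finally show ?thesis .
qed

end
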